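(* Let $\mathbb X,\mathbb Y$ be finite-dimensional real Hilbert spaces, $\alpha\in(0,1]$, $\mathfrak D\subseteq\mathbb X$ a nonempty $C^{1,\alpha}$-cone reducible closed convex set, $\mathcal T:\mathbb X\to\mathbb Y$ a linear mapping, $l:\mathbb Y\to\mathbb{R}$ a function that is strongly convex on every compact convex set and has locally Lipschitz gradient, and $v\in\mathbb X$. Let $h(x):=l(\mathcal Tx)+\langle v,x\rangle+\sigma_{\mathfrak D}(x)$. Then for any $\bar x\in\operatorname{Argmin}h$ it holds that $\bar x\in\mathcal N_{\mathfrak D}(\bar w)$ with $\bar w:=-\mathcal T^*\nabla l(\mathcal T\bar x)-v$, and there exist positive constants $\rho,\delta,\kappa$ such that $$\mathcal N_{\mathfrak D}(w)\cap B(\bar x,\delta)\subseteq\mathcal N_{\mathfrak D}(\bar w)+\kappa\|w-\bar w\|^\alpha B(0,1)\quad\text{for all }w\in B(\bar w,\rho).$$ Furthermore, if the pair $\{\mathcal T^{-1}\{\mathcal T\bar x\},\ \mathcal N_{\mathfrak D}(-\mathcal T^*\nabla l(\mathcal T\bar x)-v)\}$ is boundedly linearly regular at $\bar x$, then $h$ satisfies the KL property at $\bar x$ with exponent $\frac1{\alpha+1}$.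
   Context: $\sigma_{\mathfrak D}(x):=\sup_{u\in\mathfrak D}\langle x,u\rangle$; $\mathcal T^*$ is the adjoint of $\mathcal T$; $B(x,\eta)$ is the closed ball of radius $\eta$ about $x$; $\mathcal N_{\mathfrak D}(w):=\{z:\langle z,u-w\rangle\le0\ \forall u\in\mathfrak D\}$ for $w\in\mathfrak D$ (empty otherwise). $C^{1,\alpha}$-cone reducibility: a closed set $\mathfrak D\subseteq\mathbb X$ is $C^{1,\alpha}$-cone reducible at $\hat x\in\mathfrak D$ if there are $\rho>0$, a closed convex pointed cone $K$ in a finite-dimensional Hilbert space $\mathbb Z$ and a mapping $\Xi:\mathbb X\to\mathbb Z$ with $\Xi(\hat x)=0$, continuously differentiable on $B(\hat x,\rho)$, with $D\Xi(\hat x)$ surjective, $x\mapsto D\Xi(x)$ $\alpha$-Hölder continuous on $B(\hat x,\rho)$, and $\mathfrak D\cap B(\hat x,\rho)=\{x:\Xi(x)\in K\}\cap B(\hat x,\rho)$; $\mathfrak D$ is $C^{1,\alpha}$-cone reducible if this holds at every point of $\mathfrak D$. Bounded linear regularity: closed convex sets $\mathfrak D_1,\mathfrak D_2$ are boundedly linearly regular at $\hat x\in\mathfrak D_1\cap\mathfrak D_2$ if for every bounded neighborhood $\mathfrak U$ of $\hat x$ there is $c>0$ with $\operatorname{dist}(x,\mathfrak D_1\cap\mathfrak D_2)\le c(\operatorname{dist}(x,\mathfrak D_1)+\operatorname{dist}(x,\mathfrak D_2))$ for all $x\in\mathfrak U$. KL property with exponent $\theta\in[0,1)$: a proper closed convex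 $h$ satisfies it at $\hat x\in\operatorname{dom}\partial h$ if there exist $c\in(0,\infty]$, a neighborhood $U$ of $\hat x$ and $a_0>0$ such that, with $\varphi(s)=a_0s^{1-\theta}$, $\varphi'(h(x)-h(\hat x))\operatorname{dist}(0,\partial h(x))\ge1$ whenever $x\in U$ and $h(\hat x)<h(x)<h(\hat x)+c$. *)

theory Defs
  imports "HOL-Analysis.Analysis"
begin

definition support_fun :: "'a::real_inner set \<Rightarrow> 'a \<Rightarrow> ereal" where
  "support_fun D x = (SUP u\<in>D. ereal (inner x u))"

definition normal_cone :: "'a::real_inner set \<Rightarrow> 'a \<Rightarrow> 'a set" where
  "normal_cone D w = (if w \<in> D then {z. \<forall>u\<in>D. inner z (u - w) \<le> 0} else {})"

definition argmin_set :: "('a \<Rightarrow> ereal) \<Rightarrow> 'a set" where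
  "argmin_set h = {x. \<forall>y. h x \<le> h y}"

definition subdiff :: "('a::real_inner \<Rightarrow> ereal) \<Rightarrow> 'a \<Rightarrow> 'a set" where
  "subdiff h x = (if \<bar>h x\<bar> \<noteq> \<infinity>
     then {g. \<forall>y. h y \<ge> h x + ereal (inner g (y - x))} else {})"

text \<open>The finite-dimensional Hilbert space Z is
  realised as a linear subspace S of X (possible since D Xi(x0) is surjective onto Z, so
  dim Z \<le> dim X, and finite-dimensional Hilbert spaces are isometric iff same dimension).\<close>
definition cone_reducible_at :: "real \<Rightarrow> 'a::euclidean_space set \<Rightarrow> 'a \<Rightarrow> bool" where
  "cone_reducible_at \<alpha> D x0 \<longleftrightarrow>
    (\<exists>\<rho> > 0. \<exists>(S::'a set) K Xi DXi L.
       subspace S \<and> K \<subseteq> S \<and> closed K \<and> convex K \<and> cone K \<and> K \<inter> uminus ` K = {0} \<and>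
       (\<forall>x. Xi x \<in> S) \<and> Xi x0 = 0 \<and>
       (\<forall>x\<in>cball x0 \<rho>. linear (DXi x) \<and> (Xi has_derivative DXi x) (at x)) \<and>
       range (DXi x0) = S \<and>
       (\<forall>x\<in>cball x0 \<rho>. \<forall>y\<in>cball x0 \<rho>.
          onorm (\<lambda>u. DXi x u - DXi y u) \<le> L * (norm (x - y)) powr \<alpha>) \<and>
       D \<inter> cball x0 \<rho> = {x. Xi x \<in> K} \<inter> cball x0 \<rho>)"

definition cone_reducible :: "real \<Rightarrow> 'a::euclidean_space set \<Rightarrow> bool" where
  "cone_reducible \<alpha> D \<longleftrightarrow> (\<forall>x\<in>D. cone_reducible_at \<alpha> D x)"

definition strongly_convex_on :: "'a::real_normed_vector set \<Rightarrow> ('a \<Rightarrow> real) \<Rightarrow> bool" where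
  "strongly_convex_on C f \<longleftrightarrow> (\<exists>\<mu>>0. \<forall>x\<in>C. \<forall>y\<in>C. \<forall>t::real. 0 \<le> t \<and> t \<le> 1 \<longrightarrow>
     f ((1 - t) *\<^sub>R x + t *\<^sub>R y) \<le> (1 - t) * f x + t * f y - \<mu> / 2 * t * (1 - t) * (norm (x - y))\<^sup>2)"

definition locally_lipschitz :: "('a::metric_space \<Rightarrow> 'b::metric_space) \<Rightarrow> bool" where
  "locally_lipschitz g \<longleftrightarrow> (\<forall>y. \<exists>e>0. \<exists>L. \<forall>a\<in>ball y e. \<forall>b\<in>ball y e. dist (g a) (g b) \<le> L * dist a b)"

definition bdd_lin_regular :: "'a::real_normed_vector set \<Rightarrow> 'a set \<Rightarrow> 'a \<Rightarrow> bool" where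
  "bdd_lin_regular D1 D2 x0 \<longleftrightarrow> x0 \<in> D1 \<inter> D2 \<and>
     (\<forall>U. bounded U \<and> x0 \<in> interior U \<longrightarrow>
        (\<exists>c>0. \<forall>x\<in>U. infdist x (D1 \<inter> D2) \<le> c * (infdist x D1 + infdist x D2)))"

text \<open>KL property with exponent theta, phi(s) = a0 s^(1-theta), so
  phi'(s) = a0 (1-theta) s^(-theta); dist(0, {}) = +infinity is handled by the disjunct.\<close>
definition KL_exponent :: "('a::real_inner \<Rightarrow> ereal) \<Rightarrow> 'a \<Rightarrow> real \<Rightarrow> bool" where
  "KL_exponent h x0 \<theta> \<longleftrightarrow> subdiff h x0 \<noteq> {} \<and>
    (\<exists>c::ereal. c > 0 \<and> (\<exists>U. open U \<and> x0 \<in> U \<and> (\<exists>a0>0.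
      \<forall>x\<in>U. h x0 < h x \<and> h x < h x0 + c \<longrightarrow>
        subdiff h x = {} \<or>
        a0 * (1 - \<theta>) * (real_of_ereal (h x - h x0)) powr (- \<theta>) * infdist 0 (subdiff h x) \<ge> 1)))"

end

theory Submission
  imports Defs
begin

(* Optimality of xbar means that 0 is a subgradient of h at xbar, i.e. wbar = -grad f(xbar)
   lies in D and xbar is normal to D at wbar.  Cone reducibility at wbar, combined with a
   Graves-type inverse mapping argument, shows that every unit tangent direction n of D at wbar
   can be followed from any nearby w in D up to an error C t (|w - wbar| + t)^alpha.  Testing
   normality inequalities against these nearly tangent points yields both the Hoelder outer
   estimate for the normal cone map and the growth bound
     c dist(x, N_D(wbar))^(1 + 1/alpha) <= <x, w - wbar>   for x normal to D at w.
   For the KL property: h is constant on the solution set T^-1{T xbar} cap N_D(wbar); bounded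
   linear regularity, strong monotonicity of grad l and the growth bound give
   dist(x, solution set) <= K |g|^alpha for every subgradient g of h at x, and convexity gives
   h(x) - h(xbar) <= |g| dist(x, solution set), hence h(x) - h(xbar) <= K |g|^(1 + alpha). *)

section \<open>Normal cones and support functions\<close>

lemma mem_normal_cone: "w \<in> D \<Longrightarrow> z \<in> normal_cone D w \<longleftrightarrow> (\<forall>u\<in>D. inner z (u - w) \<le> 0)"
  by (simp add: normal_cone_def)

lemma normal_cone_base_mem: "z \<in> normal_cone D w \<Longrightarrow> w \<in> D"
  by (simp add: normal_cone_def split: if_splits)

lemma zero_in_normal_cone: "w \<in> D \<Longrightarrow> 0 \<in> normal_cone D w"
  by (simp add: normal_cone_def)

lemma normal_cone_scaleR: "z \<in> normal_cone D w \<Longrightarrow> 0 \<le> c \<Longrightarrow> c *\<^sub>R z \<in> normal_cone D w"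
  by (auto simp: normal_cone_def split: if_splits intro!: mult_nonneg_nonpos)

lemma normal_cone_eq_Inter:
  "w \<in> D \<Longrightarrow> normal_cone D w = (\<Inter>u\<in>D. {z. inner (u - w) z \<le> 0})"
  by (auto simp: normal_cone_def inner_commute)

lemma closed_normal_cone: "closed (normal_cone D w)"
proof (cases "w \<in> D")
  case True
  show ?thesis
    unfolding normal_cone_eq_Inter[OF True] by (intro closed_INT ballI closed_halfspace_le)
qed (simp add: normal_cone_def)

lemma convex_normal_cone: "convex (normal_cone D w)"
proof (cases "w \<in> D")
  case True
  show ?thesis
    unfolding normal_cone_eq_Inter[OF True] by (intro convex_INT ballI convex_halfspace_le)
qed (simp add: normal_cone_def)

lemma support_fun_upper: "u \<in> D \<Longrightarrow> ereal (inner x u) \<le> support_fun D x"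
  unfolding support_fun_def by (rule SUP_upper2) auto

lemma support_fun_least: "(\<And>u. u \<in> D \<Longrightarrow> inner x u \<le> b) \<Longrightarrow> support_fun D x \<le> ereal b"
  unfolding support_fun_def by (rule SUP_least) auto

lemma support_fun_neq_MInfty: "D \<noteq> {} \<Longrightarrow> support_fun D x \<noteq> -\<infinity>"
  using support_fun_upper[of _ D x] by fastforce

lemma support_fun_zero: "D \<noteq> {} \<Longrightarrow> support_fun D 0 = 0"
  unfolding support_fun_def by (simp add: zero_ereal_def)

lemma support_fun_normal_cone: "z \<in> normal_cone D w \<Longrightarrow> support_fun D z = ereal (inner z w)"
proof (rule antisym)
  assume z: "z \<in> normal_cone D w"
  then have w: "w \<in> D" by (rule normal_cone_base_mem)
  show "support_fun D z \<le> ereal (inner z w)"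
    using z w by (intro support_fun_least) (auto simp: mem_normal_cone inner_diff_right)
  show "ereal (inner z w) \<le> support_fun D z"
    using w by (rule support_fun_upper)
qed

lemma support_fun_add_le: "support_fun D (a + b) \<le> support_fun D a + support_fun D b"
  unfolding support_fun_def[of D "a + b"]
proof (rule SUP_least)
  fix u assume "u \<in> D"
  then have "ereal (inner a u) + ereal (inner b u) \<le> support_fun D a + support_fun D b"
    by (intro add_mono support_fun_upper)
  then show "ereal (inner (a + b) u) \<le> support_fun D a + support_fun D b"
    by (simp add: inner_add_left)
qed

lemma support_fun_scaleR_le: "0 \<le> t \<Longrightarrow> support_fun D (t *\<^sub>R x) \<le> ereal t * support_fun D x"
  unfolding support_fun_def[of D "t *\<^sub>R x"]
proof (rule SUP_least)
  fix u assume "0 \<le> t" "u \<in> D"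
  then have "ereal t * ereal (inner x u) \<le> ereal t * support_fun D x"
    by (intro ereal_mult_left_mono support_fun_upper) auto
  then show "ereal (inner (t *\<^sub>R x) u) \<le> ereal t * support_fun D x"
    by simp
qed

lemma support_fun_separation:
  fixes D :: "'a::euclidean_space set"
  assumes "closed D" "convex D" "p \<notin> D"
  shows "\<exists>a. support_fun D a < ereal (inner a p)"
proof -
  obtain a b where ab: "inner a p < b" "\<forall>x\<in>D. inner a x > b"
    using separating_hyperplane_closed_point[OF assms(2,1,3)] by blast
  have "support_fun D (-a) \<le> ereal (-b)"
    using ab by (intro support_fun_least) force
  also have "\<dots> < ereal (inner (-a) p)"
    using ab by simp
  finally show ?thesis by blast
qed

lemma polar_separation:
  fixes K :: "'a::euclidean_space set"
  assumes "closed K" "convex K" "cone K" "0 \<in> K" "p \<notin> K"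
  shows "\<exists>\<mu>. (\<forall>k\<in>K. inner \<mu> k \<le> 0) \<and> inner \<mu> p > 0"
proof -
  obtain a b where ab: "inner a p < b" "\<forall>x\<in>K. inner a x > b"
    using separating_hyperplane_closed_point[OF assms(2,1,5)] by blast
  have b: "b < 0"
    using ab(2) assms(4) by force
  have "inner a k \<ge> 0" if k: "k \<in> K" for k
  proof (rule ccontr)
    assume neg: "\<not> inner a k \<ge> 0"
    have "(b / inner a k) *\<^sub>R k \<in> K"
      using b neg by (intro mem_cone[OF assms(3) k]) (simp add: divide_nonpos_neg)
    with ab(2) neg show False
      by fastforce
  qed
  then show ?thesis
    using ab b by (intro exI[of _ "-a"]) auto
qed

lemma normal_cone_projection:
  fixes D :: "'a::euclidean_space set"
  assumes "w \<in> D"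
  obtains p where "p \<in> normal_cone D w" "infdist x (normal_cone D w) = norm (x - p)"
    "inner (x - p) p = 0" "\<forall>y\<in>normal_cone D w. inner (x - p) y \<le> 0"
proof -
  let ?N = "normal_cone D w"
  obtain p where p: "p \<in> ?N" "infdist x ?N = dist x p"
    using infdist_attains_inf[OF closed_normal_cone] zero_in_normal_cone[OF assms] by blast
  have "\<forall>z\<in>?N. dist x p \<le> dist x z"
    using p(2) infdist_le by metis
  then have dot: "inner (x - p) (y - p) \<le> 0" if "y \<in> ?N" for y
    using any_closest_point_dot[OF convex_normal_cone closed_normal_cone p(1) that] by blast
  have "inner (x - p) (0 - p) \<le> 0" "inner (x - p) (2 *\<^sub>R p - p) \<le> 0"
    using dot[OF zero_in_normal_cone[OF assms]] dot[OF normal_cone_scaleR[OF p(1), of 2]] by auto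
  then have orth: "inner (x - p) p = 0"
    by (simp add: inner_diff_right algebra_simps)
  moreover have "inner (x - p) y \<le> 0" if "y \<in> ?N" for y
    using dot[OF that] orth by (simp add: inner_diff_right)
  ultimately show ?thesis
    using that p by (simp add: dist_norm)
qed

lemma normal_cone_distance_direction:
  fixes D :: "'a::euclidean_space set"
  assumes "w \<in> D" and pos: "0 < infdist x (normal_cone D w)"
  obtains p n where "p \<in> normal_cone D w" "x = p + infdist x (normal_cone D w) *\<^sub>R n"
    "norm n = 1" "\<forall>y\<in>normal_cone D w. inner n y \<le> 0" "inner x n = infdist x (normal_cone D w)"
proof -
  let ?\<eta> = "infdist x (normal_cone D w)"
  obtain p where p: "p \<in> normal_cone D w" "?\<eta> = norm (x - p)"
    "inner (x - p) p = 0" "\<forall>y\<in>normal_cone D w. inner (x - p) y \<le> 0"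
    using normal_cone_projection[OF assms(1)] by blast
  define n where "n = (1 / ?\<eta>) *\<^sub>R (x - p)"
  have "x = p + ?\<eta> *\<^sub>R n"
    using pos by (simp add: n_def)
  moreover have "norm n = 1"
    using pos p(2) by (simp add: n_def)
  moreover have "\<forall>y\<in>normal_cone D w. inner n y \<le> 0"
    using p(4) pos by (simp add: n_def divide_nonpos_pos)
  moreover have "inner x n = ?\<eta>"
  proof -
    have "inner x (x - p) = inner (x - p) (x - p)"
      using p(3) by (simp add: inner_diff_left inner_diff_right inner_commute)
    then show ?thesis
      using pos p(2) by (simp add: n_def power2_norm_eq_inner[symmetric] power2_eq_square)
  qed
  ultimately show ?thesis
    using that p(1) by blast
qed

section \<open>First-order conditions\<close>

lemma has_derivative_ge_of_lower_bound:
  fixes f :: "'a::real_normed_vector \<Rightarrow> real"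
  assumes df: "(f has_derivative f') (at x)" and "0 < e"
    and low: "\<And>t. 0 < t \<Longrightarrow> t \<le> e \<Longrightarrow> c * t - K * t\<^sup>2 \<le> f (x + t *\<^sub>R d) - f x"
  shows "c \<le> f' d"
proof -
  have line: "((\<lambda>t::real. x + t *\<^sub>R d) has_derivative (\<lambda>t. t *\<^sub>R d)) (at 0)"
    by (auto intro!: derivative_eq_intros)
  have "((\<lambda>t. f (x + t *\<^sub>R d)) has_derivative (\<lambda>t. f' (t *\<^sub>R d))) (at 0)"
    using has_derivative_compose[OF line, of f f'] df by simp
  moreover have "(\<lambda>t. f' (t *\<^sub>R d)) = (*) (f' d)"
    using linear_scale[OF has_derivative_linear[OF df]] by (auto simp: fun_eq_iff)
  ultimately have "((\<lambda>t. f (x + t *\<^sub>R d)) has_field_derivative f' d) (at 0)"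
    by (simp add: has_field_derivative_def)
  then have "((\<lambda>t. (f (x + t *\<^sub>R d) - f x) / t) \<longlongrightarrow> f' d) (at_right 0)"
    unfolding DERIV_def filterlim_at_split by simp
  moreover have "((\<lambda>t::real. c - K * t) \<longlongrightarrow> c - K * 0) (at_right 0)"
    by (intro tendsto_intros)
  moreover have "eventually (\<lambda>t. c - K * t \<le> (f (x + t *\<^sub>R d) - f x) / t) (at_right 0)"
    unfolding eventually_at_right_field
  proof (intro exI[of _ e] conjI allI impI)
    fix t :: real assume t: "0 < t" "t < e"
    then have "(c - K * t) * t \<le> f (x + t *\<^sub>R d) - f x"
      using low[of t] by (simp add: algebra_simps power2_eq_square)
    then show "c - K * t \<le> (f (x + t *\<^sub>R d) - f x) / t"
      using t by (simp add: pos_le_divide_eq)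
  qed (fact \<open>0 < e\<close>)
  ultimately show ?thesis
    using tendsto_le[OF trivial_limit_at_right_real] by simp
qed

text \<open>The sum rule \<open>\<partial>(f + \<sigma>\<^sub>D)(x) = \<nabla>f(x) + \<partial>\<sigma>\<^sub>D(x)\<close> combined with
  \<open>\<partial>\<sigma>\<^sub>D(x) = {w \<in> D. x \<in> N\<^sub>D(w)}\<close>; both are read off from difference quotients of \<open>f\<close>.\<close>
lemma subdiff_smooth_plus_support_fun:
  fixes D :: "'a::euclidean_space set" and f :: "'a \<Rightarrow> real"
  assumes D: "D \<noteq> {}" "closed D" "convex D"
    and df: "(f has_derivative (\<lambda>u. inner gf u)) (at x)"
    and h: "\<And>y. h y = ereal (f y) + support_fun D y"
    and g: "g \<in> subdiff h x"
  shows "g - gf \<in> D" "x \<in> normal_cone D (g - gf)"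
proof -
  have fin: "\<bar>h x\<bar> \<noteq> \<infinity>" and sub: "\<And>y. h x + ereal (inner g (y - x)) \<le> h y"
    using g by (auto simp: subdiff_def split: if_splits)
  obtain sx where sx: "support_fun D x = ereal sx"
    using fin h[of x] support_fun_neq_MInfty[OF D(1), of x] by (cases "support_fun D x") auto
  have step: "(inner g d - s) * t \<le> f (x + t *\<^sub>R d) - f x"
    if "support_fun D (x + t *\<^sub>R d) \<le> ereal (sx + t * s)" for d t s
  proof -
    have "ereal (f x + sx + t * inner g d) \<le> h (x + t *\<^sub>R d)"
      using sub[of "x + t *\<^sub>R d"] h[of x] sx by simp
    also have "\<dots> \<le> ereal (f (x + t *\<^sub>R d)) + ereal (sx + t * s)"
      unfolding h by (rule add_left_mono[OF that])
    finally show ?thesis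
      by (simp add: algebra_simps)
  qed
  have dual: "ereal (inner (g - gf) d) \<le> support_fun D d" for d
  proof (cases "support_fun D d")
    case (real s)
    have "inner g d - s \<le> inner gf d"
    proof (rule has_derivative_ge_of_lower_bound[OF df zero_less_one, where K = 0])
      fix t :: real assume t: "0 < t" "t \<le> 1"
      have "support_fun D (t *\<^sub>R d) \<le> ereal (t * s)"
        using support_fun_scaleR_le[of t D d] t real by simp
      then have "support_fun D (x + t *\<^sub>R d) \<le> ereal (sx + t * s)"
        using support_fun_add_le[of D x "t *\<^sub>R d"] sx
        by (metis add_left_mono order_trans plus_ereal.simps(1))
      then show "(inner g d - s) * t - 0 * t\<^sup>2 \<le> f (x + t *\<^sub>R d) - f x"
        using step by simp
    qed
    then show ?thesis
      using real by (simp add: inner_diff_left)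
  qed (use support_fun_neq_MInfty[OF D(1)] in auto)
  show gD: "g - gf \<in> D"
  proof (rule ccontr)
    assume "g - gf \<notin> D"
    then obtain a where "support_fun D a < ereal (inner a (g - gf))"
      using support_fun_separation[OF D(2,3)] by blast
    with dual[of a] show False
      by (simp add: inner_commute)
  qed
  have "sx - inner g x \<le> inner gf (-x)"
  proof (rule has_derivative_ge_of_lower_bound[OF df zero_less_one, where K = 0])
    fix t :: real assume t: "0 < t" "t \<le> 1"
    have "x + t *\<^sub>R (-x) = (1 - t) *\<^sub>R x"
      by (simp add: algebra_simps)
    then have "support_fun D (x + t *\<^sub>R (-x)) \<le> ereal (sx + t * (- sx))"
      using support_fun_scaleR_le[of "1 - t" D x] t sx by (simp add: algebra_simps)
    from step[OF this] show "(sx - inner g x) * t - 0 * t\<^sup>2 \<le> f (x + t *\<^sub>R (-x)) - f x"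
      by (simp add: algebra_simps)
  qed
  moreover have "inner x (g - gf) = inner g x - inner gf x"
    by (simp add: inner_diff_right inner_commute)
  ultimately have "inner x u \<le> inner x (g - gf)" if "u \<in> D" for u
    using support_fun_upper[OF that, of x] sx by (simp add: inner_commute)
  then show "x \<in> normal_cone D (g - gf)"
    using gD by (simp add: mem_normal_cone inner_diff_right)
qed

lemma strongly_convex_on_imp_strongly_monotone:
  fixes l :: "'a::real_inner \<Rightarrow> real"
  assumes "strongly_convex_on C l"
    and dl: "\<And>y. (l has_derivative (\<lambda>u. inner (gl y) u)) (at y)"
  obtains \<mu> where "\<mu> > 0" "\<And>a b. a \<in> C \<Longrightarrow> b \<in> C \<Longrightarrow> \<mu> * (norm (a - b))\<^sup>2 \<le> inner (gl a - gl b) (a - b)"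
proof -
  obtain \<mu> where \<mu>: "\<mu> > 0" and ineq: "\<And>x y t. x \<in> C \<Longrightarrow> y \<in> C \<Longrightarrow> 0 \<le> t \<Longrightarrow> t \<le> 1 \<Longrightarrow>
     l ((1 - t) *\<^sub>R x + t *\<^sub>R y) \<le> (1 - t) * l x + t * l y - \<mu> / 2 * t * (1 - t) * (norm (x - y))\<^sup>2"
    using assms(1) unfolding strongly_convex_on_def by blast
  have first_order: "inner (gl a) (b - a) \<le> l b - l a - \<mu> / 2 * (norm (a - b))\<^sup>2"
    if a: "a \<in> C" and b: "b \<in> C" for a b
  proof -
    have "-(l b - l a - \<mu> / 2 * (norm (a - b))\<^sup>2) \<le> - inner (gl a) (b - a)"
    proof (rule has_derivative_ge_of_lower_bound[OF _ zero_less_one,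
          where f = "\<lambda>y. - l y" and f' = "\<lambda>u. - inner (gl a) u" and K = "\<mu> / 2 * (norm (a - b))\<^sup>2"])
      show "((\<lambda>y. - l y) has_derivative (\<lambda>u. - inner (gl a) u)) (at a)"
        using dl[of a] by (intro derivative_intros)
      fix t :: real assume t: "0 < t" "t \<le> 1"
      have "a + t *\<^sub>R (b - a) = (1 - t) *\<^sub>R a + t *\<^sub>R b"
        by (simp add: algebra_simps)
      then have "l (a + t *\<^sub>R (b - a)) \<le> (1 - t) * l a + t * l b - \<mu> / 2 * t * (1 - t) * (norm (a - b))\<^sup>2"
        using ineq[OF a b, of t] t by simp
      then show "- (l b - l a - \<mu> / 2 * (norm (a - b))\<^sup>2) * t - \<mu> / 2 * (norm (a - b))\<^sup>2 * t\<^sup>2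
            \<le> - l (a + t *\<^sub>R (b - a)) - - l a"
        by (simp add: algebra_simps power2_eq_square add_divide_distrib diff_divide_distrib)
    qed
    then show ?thesis by simp
  qed
  show ?thesis
  proof (rule that[OF \<mu>])
    fix a b assume "a \<in> C" "b \<in> C"
    then show "\<mu> * (norm (a - b))\<^sup>2 \<le> inner (gl a - gl b) (a - b)"
      using first_order[of a b] first_order[of b a] norm_minus_commute[of a b]
      by (simp add: inner_diff_left inner_diff_right algebra_simps)
  qed
qed

lemma holder_linearization_bound:
  fixes Xi :: "'a::euclidean_space \<Rightarrow> 'a"
  assumes der: "\<forall>x\<in>cball wb \<rho>. (Xi has_derivative DXi x) (at x)"
    and hol: "\<forall>x\<in>cball wb \<rho>. onorm (\<lambda>u. DXi x u - DXi wb u) \<le> L * norm (x - wb) powr \<alpha>"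
    and "0 < \<alpha>" "0 \<le> L" "0 \<le> r" "r \<le> \<rho>" "a \<in> cball wb r" "b \<in> cball wb r"
  shows "norm (Xi b - Xi a - DXi wb (b - a)) \<le> norm (b - a) * (L * r powr \<alpha>)"
proof (rule differentiable_bound_linearization[where S = "cball wb r" and f' = DXi])
  show "a + t *\<^sub>R (b - a) \<in> cball wb r" if "t \<in> {0..1}" for t
    using convexD_alt[OF convex_cball assms(7,8), of t] that by (simp add: algebra_simps)
  show "(Xi has_derivative DXi x) (at x within cball wb r)" if "x \<in> cball wb r" for x
    using der that \<open>r \<le> \<rho>\<close> by (auto intro: has_derivative_at_withinI)
  show "onorm (DXi x - DXi wb) \<le> L * r powr \<alpha>" if x: "x \<in> cball wb r" for x
  proof -
    have "onorm (DXi x - DXi wb) \<le> L * norm (x - wb) powr \<alpha>"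
      using hol x \<open>r \<le> \<rho>\<close> by (auto simp: fun_diff_def)
    also have "\<dots> \<le> L * r powr \<alpha>"
      using x assms(3,4) by (intro mult_left_mono powr_mono2) (auto simp: dist_norm norm_minus_commute)
    finally show ?thesis .
  qed
qed (use \<open>0 \<le> r\<close> in simp)

section \<open>Cone reduction\<close>

text \<open>Directions in the polar of \<open>normal_cone D w\<close> (the tangent cone of \<open>D\<close> at \<open>w\<close>) are
  mapped into \<open>K\<close> by the derivative of a reduction map.\<close>
lemma cone_reduction_tangent:
  fixes Xi :: "'a::euclidean_space \<Rightarrow> 'a" and K D :: "'a set"
  assumes dXi: "(Xi has_derivative A) (at w)" and "0 < \<rho>"
    and K: "closed K" "convex K" "cone K" "0 \<in> K"
    and D: "convex D" "w \<in> D" and Xi0: "Xi w = 0"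
    and red: "D \<inter> cball w \<rho> = {x. Xi x \<in> K} \<inter> cball w \<rho>"
    and n: "\<forall>y\<in>normal_cone D w. inner n y \<le> 0"
  shows "A n \<in> K"
proof (rule ccontr)
  assume "A n \<notin> K"
  then obtain \<mu> where \<mu>: "\<forall>k\<in>K. inner \<mu> k \<le> 0" "inner \<mu> (A n) > 0"
    using polar_separation[OF K] by blast
  have linA: "linear A"
    using dXi by (rule has_derivative_linear)
  have "adjoint A \<mu> \<in> normal_cone D w"
    unfolding mem_normal_cone[OF D(2)]
  proof
    fix u assume u: "u \<in> D"
    define e where "e = min 1 (\<rho> / (norm (u - w) + 1))"
    have "0 \<le> - inner \<mu> (A (u - w))"
    proof (rule has_derivative_ge_of_lower_bound[where f = "\<lambda>y. - inner \<mu> (Xi y)"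
          and f' = "\<lambda>h. - inner \<mu> (A h)" and K = 0])
      show "((\<lambda>y. - inner \<mu> (Xi y)) has_derivative (\<lambda>h. - inner \<mu> (A h))) (at w)"
        using dXi by (intro derivative_intros)
      show "0 < e"
        using \<open>0 < \<rho>\<close> by (auto simp: e_def intro!: divide_pos_pos add_nonneg_pos)
      fix t :: real assume t: "0 < t" "t \<le> e"
      have "w + t *\<^sub>R (u - w) = (1 - t) *\<^sub>R w + t *\<^sub>R u"
        by (simp add: algebra_simps)
      then have "w + t *\<^sub>R (u - w) \<in> D"
        using convexD_alt[OF D(1,2) u, of t] t by (simp add: e_def)
      moreover have "t * norm (u - w) \<le> \<rho>"
        using t mult_mono[of t "\<rho> / (norm (u - w) + 1)" "norm (u - w)" "norm (u - w) + 1"]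
          add_nonneg_pos[OF norm_ge_zero[of "u - w"] zero_less_one]
        by (simp add: e_def)
      then have "w + t *\<^sub>R (u - w) \<in> cball w \<rho>"
        using t by (simp add: dist_norm)
      ultimately have "Xi (w + t *\<^sub>R (u - w)) \<in> K"
        using red by blast
      then show "0 * t - 0 * t\<^sup>2 \<le> - inner \<mu> (Xi (w + t *\<^sub>R (u - w))) - - inner \<mu> (Xi w)"
        using \<mu>(1) Xi0 by simp
    qed
    then show "inner (adjoint A \<mu>) (u - w) \<le> 0"
      by (simp add: adjoint_works[OF linA] inner_commute)
  qed
  then have "inner n (adjoint A \<mu>) \<le> 0"
    using n by blast
  with \<mu>(2) show False
    by (simp add: adjoint_works[OF linA] inner_commute)
qed

text \<open>Graves' argument: if \<open>Xi\<close> is a contraction-size perturbation of a linear map with a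
  bounded right inverse \<open>B\<close>, the fixed point of \<open>s \<mapsto> s - (Xi (y + B s) - k)\<close> solves
  \<open>Xi u = k\<close> close to \<open>y\<close>.\<close>
lemma perturbed_right_inverse_solvable:
  fixes Xi :: "'a::euclidean_space \<Rightarrow> 'a" and S :: "'a set"
  assumes S: "subspace S" and XiS: "\<And>x. Xi x \<in> S" and k: "k \<in> S"
    and B: "linear B" "\<And>s. s \<in> S \<Longrightarrow> A (B s) = s" "0 < Bn" "\<And>s. norm (B s) \<le> Bn * norm s"
    and rem: "\<And>a b. a \<in> cball w \<rho> \<Longrightarrow> b \<in> cball w \<rho> \<Longrightarrow>
      norm (Xi a - Xi b - A (a - b)) \<le> norm (a - b) / (2 * Bn)"
    and y: "norm (y - w) + 2 * Bn * norm (Xi y - k) \<le> \<rho>"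
  shows "\<exists>u. Xi u = k \<and> norm (u - y) \<le> 2 * Bn * norm (Xi y - k) \<and> norm (u - w) \<le> \<rho>"
proof -
  define R where "R = 2 * norm (Xi y - k)"
  define X where "X = S \<inter> cball 0 R"
  define G where "G s = s - (Xi (y + B s) - k)" for s
  have B_bound: "norm (B s) \<le> Bn * R" if "s \<in> X" for s
  proof -
    have "Bn * norm s \<le> Bn * R"
      using that B(3) by (simp add: X_def)
    then show ?thesis
      using B(4)[of s] by linarith
  qed
  have in_ball: "y + B s \<in> cball w \<rho>" if "s \<in> X" for s
    using B_bound[OF that] y norm_triangle_ineq[of "y - w" "B s"]
    by (simp add: dist_norm norm_minus_commute R_def algebra_simps)
  have contr: "dist (G s1) (G s2) \<le> (1/2) * dist s1 s2" if s: "s1 \<in> X" "s2 \<in> X" for s1 s2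
  proof -
    have "s1 - s2 \<in> S"
      using s S by (auto simp: X_def intro: subspace_diff)
    then have "A ((y + B s1) - (y + B s2)) = s1 - s2"
      using B(2)[OF \<open>s1 - s2 \<in> S\<close>] by (simp add: linear_diff[OF B(1)])
    then have "norm (G s1 - G s2) = norm (Xi (y + B s1) - Xi (y + B s2) - A ((y + B s1) - (y + B s2)))"
      unfolding G_def by (metis (no_types, lifting) diff_diff_eq2 add_diff_cancel_left' norm_minus_commute
          diff_add_eq diff_diff_add)
    also have "\<dots> \<le> norm (B (s1 - s2)) / (2 * Bn)"
      using rem[OF in_ball[OF s(1)] in_ball[OF s(2)]] B(1) by (simp add: linear_diff)
    also have "\<dots> \<le> (1/2) * norm (s1 - s2)"
      using B(3) B(4)[of "s1 - s2"] by (simp add: field_simps)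
    finally show ?thesis
      by (simp add: dist_norm)
  qed
  have X0: "0 \<in> X"
    using S by (simp add: X_def R_def subspace_0)
  have GX: "G ` X \<subseteq> X"
  proof
    fix z assume "z \<in> G ` X"
    then obtain s where s: "s \<in> X" and z: "z = G s"
      by blast
    have "G s \<in> S"
      unfolding G_def using s k XiS S by (auto simp: X_def intro: subspace_diff)
    moreover have "norm (G s) \<le> R"
    proof -
      have "norm (G s) \<le> norm (G s - G 0) + norm (G 0)"
        using norm_triangle_ineq[of "G s - G 0" "G 0"] by simp
      also have "\<dots> \<le> (1/2) * norm s + norm (Xi y - k)"
        using contr[OF s X0] linear_0[OF B(1)] norm_minus_commute[of k "Xi y"]
        by (simp add: dist_norm G_def)
      also have "\<dots> \<le> R"
        using s by (auto simp: X_def R_def)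
      finally show ?thesis .
    qed
    ultimately show "z \<in> X"
      by (simp add: X_def z)
  qed
  have "complete X"
    unfolding X_def complete_eq_closed using closed_subspace[OF S] by (intro closed_Int) auto
  then have "\<exists>!s\<in>X. G s = s"
    using X0 by (intro Banach_fix[OF _ _ _ _ GX contr]) auto
  then obtain s where s: "s \<in> X" "G s = s"
    by blast
  show ?thesis
  proof (intro exI conjI)
    show "Xi (y + B s) = k"
      using s(2) by (simp add: G_def algebra_simps)
    show "norm (y + B s - y) \<le> 2 * Bn * norm (Xi y - k)"
      using B_bound[OF s(1)] by (simp add: R_def)
    show "norm (y + B s - w) \<le> \<rho>"
      using in_ball[OF s(1)] by (simp add: dist_norm norm_minus_commute)
  qed
qed

lemma holder_map_local_inverse:
  fixes Xi :: "'a::euclidean_space \<Rightarrow> 'a" and S :: "'a set"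
  assumes der: "\<forall>x\<in>cball w \<rho>. (Xi has_derivative DXi x) (at x)"
    and hol: "\<forall>x\<in>cball w \<rho>. onorm (\<lambda>u. DXi x u - DXi w u) \<le> L * norm (x - w) powr \<alpha>"
    and "0 < \<alpha>" "0 < L" "0 < \<rho>"
    and S: "subspace S" and XiS: "\<And>x. Xi x \<in> S" and rng: "range (DXi w) = S"
  obtains r0 c where "0 < r0" "0 < c" "\<And>y k. norm (y - w) \<le> r0 \<Longrightarrow> k \<in> S \<Longrightarrow> norm (Xi y - k) \<le> r0 \<Longrightarrow>
    \<exists>u. Xi u = k \<and> norm (u - y) \<le> c * norm (Xi y - k) \<and> norm (u - w) \<le> \<rho>"
proof -
  have linA: "linear (DXi w)"
    using der \<open>0 < \<rho>\<close> by (auto intro: has_derivative_linear)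
  obtain B where B: "linear B" "\<forall>v\<in>range (DXi w). DXi w (B v) = v"
    using linear_exists_right_inverse_on[OF linA subspace_UNIV] by blast
  obtain Bn where Bn: "0 < Bn" "\<And>x. norm (B x) \<le> Bn * norm x"
    using linear_bounded_pos[OF B(1)] by blast
  define \<rho>1 where "\<rho>1 = min \<rho> ((1 / (2 * L * Bn)) powr (1 / \<alpha>))"
  have \<rho>1: "0 < \<rho>1" "\<rho>1 \<le> \<rho>"
    using \<open>0 < \<rho>\<close> \<open>0 < L\<close> Bn by (auto simp: \<rho>1_def)
  have "\<rho>1 powr \<alpha> \<le> ((1 / (2 * L * Bn)) powr (1 / \<alpha>)) powr \<alpha>"
    using \<rho>1 \<open>0 < \<alpha>\<close> by (intro powr_mono2) (auto simp: \<rho>1_def)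
  then have small: "L * \<rho>1 powr \<alpha> \<le> 1 / (2 * Bn)"
    using \<open>0 < \<alpha>\<close> \<open>0 < L\<close> Bn by (simp add: powr_powr field_simps)
  have rem: "norm (Xi a - Xi b - DXi w (a - b)) \<le> norm (a - b) / (2 * Bn)"
    if "a \<in> cball w \<rho>1" "b \<in> cball w \<rho>1" for a b
  proof -
    have "norm (Xi a - Xi b - DXi w (a - b)) \<le> norm (a - b) * (L * \<rho>1 powr \<alpha>)"
      using holder_linearization_bound[OF der hol \<open>0 < \<alpha>\<close> _ _ \<rho>1(2) that(2,1)] \<open>0 < L\<close> \<rho>1 by simp
    also have "\<dots> \<le> norm (a - b) / (2 * Bn)"
      using mult_left_mono[OF small, of "norm (a - b)"] by simp
    finally show ?thesis .
  qed
  define r0 where "r0 = \<rho>1 / (1 + 2 * Bn)"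
  have "r0 + 2 * Bn * r0 = r0 * (1 + 2 * Bn)"
    by (simp add: algebra_simps)
  also have "\<dots> = \<rho>1"
    using Bn by (simp add: r0_def)
  finally have r0: "0 < r0" "r0 + 2 * Bn * r0 = \<rho>1"
    using \<rho>1 Bn by (auto simp: r0_def)
  show ?thesis
  proof (rule that[OF r0(1), of "2 * Bn"])
    fix y k assume y: "norm (y - w) \<le> r0" and k: "k \<in> S" and yk: "norm (Xi y - k) \<le> r0"
    have "2 * Bn * norm (Xi y - k) \<le> 2 * Bn * r0"
      using yk Bn by simp
    then have "norm (y - w) + 2 * Bn * norm (Xi y - k) \<le> \<rho>1"
      using y r0 by linarith
    with perturbed_right_inverse_solvable[OF S XiS k B(1) _ Bn rem]
    obtain u where "Xi u = k" "norm (u - y) \<le> 2 * Bn * norm (Xi y - k)" "norm (u - w) \<le> \<rho>1"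
      using B(2) rng by blast
    then show "\<exists>u. Xi u = k \<and> norm (u - y) \<le> 2 * Bn * norm (Xi y - k) \<and> norm (u - w) \<le> \<rho>"
      using \<rho>1 by force
  qed (use Bn in simp)
qed

definition uniform_tangent_approx :: "real \<Rightarrow> 'a::real_inner set \<Rightarrow> 'a \<Rightarrow> real \<Rightarrow> real \<Rightarrow> bool" where
  "uniform_tangent_approx \<alpha> D w \<rho> C \<longleftrightarrow> (\<forall>v\<in>D. \<forall>n t. norm (v - w) \<le> \<rho> \<longrightarrow> norm n = 1 \<longrightarrow>
     (\<forall>y\<in>normal_cone D w. inner n y \<le> 0) \<longrightarrow> 0 < t \<longrightarrow> t \<le> \<rho> \<longrightarrow>
     (\<exists>u\<in>D. norm (u - (v + t *\<^sub>R n)) \<le> C * t * (norm (v - w) + t) powr \<alpha>))"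

lemma uniform_tangent_approxD:
  assumes "uniform_tangent_approx \<alpha> D w \<rho> C" "v \<in> D" "norm (v - w) \<le> \<rho>" "norm n = 1"
    "\<forall>y\<in>normal_cone D w. inner n y \<le> 0" "0 < t" "t \<le> \<rho>"
  obtains u where "u \<in> D" "norm (u - (v + t *\<^sub>R n)) \<le> C * t * (norm (v - w) + t) powr \<alpha>"
  using assms unfolding uniform_tangent_approx_def by blast

lemma cone_reducible_at_imp_uniform_tangent_approx:
  fixes D :: "'a::euclidean_space set"
  assumes "cone_reducible_at \<alpha> D w" "0 < \<alpha>" "convex D" "w \<in> D"
  obtains \<rho> C where "0 < \<rho>" "0 < C" "uniform_tangent_approx \<alpha> D w \<rho> C"
proof -
  obtain \<rho> and S K :: "'a set" and Xi :: "'a \<Rightarrow> 'a" and DXi L0 where \<rho>: "0 < \<rho>"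
    and S: "subspace S" "K \<subseteq> S"
    and K: "closed K" "convex K" "cone K" "K \<inter> uminus ` K = {0}"
    and XiS: "\<forall>x. Xi x \<in> S" and Xi0: "Xi w = 0"
    and der: "\<forall>x\<in>cball w \<rho>. linear (DXi x) \<and> (Xi has_derivative DXi x) (at x)"
    and rng: "range (DXi w) = S"
    and hol0: "\<forall>x\<in>cball w \<rho>. \<forall>y\<in>cball w \<rho>. onorm (\<lambda>u. DXi x u - DXi y u) \<le> L0 * (norm (x - y)) powr \<alpha>"
    and red: "D \<inter> cball w \<rho> = {x. Xi x \<in> K} \<inter> cball w \<rho>"
    using assms(1) unfolding cone_reducible_at_def by (elim exE conjE) (rule that; assumption)
  define L where "L = \<bar>L0\<bar> + 1"
  have L: "0 < L"
    by (simp add: L_def add_nonneg_pos)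
  have hol: "\<forall>x\<in>cball w \<rho>. onorm (\<lambda>u. DXi x u - DXi w u) \<le> L * norm (x - w) powr \<alpha>"
    using hol0 \<rho> by (force simp: L_def intro: order_trans[OF _ mult_right_mono])
  have der': "\<forall>x\<in>cball w \<rho>. (Xi has_derivative DXi x) (at x)"
    using der by blast
  have K0: "0 \<in> K"
    using K(4) by blast
  have K_closed: "\<forall>x\<in>K. \<forall>y\<in>K. x + y \<in> K" "\<forall>x\<in>K. \<forall>c\<ge>0. c *\<^sub>R x \<in> K"
    using convex_cone[of K] K(2,3) by auto
  have dXi: "(Xi has_derivative DXi w) (at w)"
    using der \<rho> by simp
  obtain r0 c where r0: "0 < r0" and c: "0 < c" and inverse: "\<And>y k. norm (y - w) \<le> r0 \<Longrightarrow> k \<in> S \<Longrightarrow>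
     norm (Xi y - k) \<le> r0 \<Longrightarrow> \<exists>u. Xi u = k \<and> norm (u - y) \<le> c * norm (Xi y - k) \<and> norm (u - w) \<le> \<rho>"
    using holder_map_local_inverse[OF der' hol \<open>0 < \<alpha>\<close> L \<rho> S(1) _ rng] XiS by metis
  define \<rho>2 where "\<rho>2 = min (min (\<rho>/2) (r0/2)) (min (1/2) (r0/L))"
  have "\<rho>2 \<le> \<rho>/2" "\<rho>2 \<le> r0/2" "\<rho>2 \<le> 1/2" "\<rho>2 \<le> r0/L"
    unfolding \<rho>2_def by linarith+
  then have \<rho>2: "0 < \<rho>2" "2 * \<rho>2 \<le> \<rho>" "2 * \<rho>2 \<le> r0" "2 * \<rho>2 \<le> 1" "\<rho>2 * L \<le> r0"
    using \<rho> r0 L by (auto simp: \<rho>2_def pos_le_divide_eq)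
  have "uniform_tangent_approx \<alpha> D w \<rho>2 (c * L)"
    unfolding uniform_tangent_approx_def
  proof (intro ballI allI impI)
    fix v n t assume v: "v \<in> D" "norm (v - w) \<le> \<rho>2" and n: "norm n = 1"
      and tangent: "\<forall>y\<in>normal_cone D w. inner n y \<le> 0" and t: "0 < t" "t \<le> \<rho>2"
    define y where "y = v + t *\<^sub>R n"
    define r where "r = norm (v - w) + t"
    have r: "0 \<le> r" "r \<le> 2 * \<rho>2"
      using v t by (auto simp: r_def)
    have vr: "v \<in> cball w r"
      using t by (simp add: r_def dist_norm norm_minus_commute)
    have "norm (y - w) \<le> norm (v - w) + norm (t *\<^sub>R n)"
      using norm_triangle_ineq[of "v - w" "t *\<^sub>R n"] by (simp add: y_def algebra_simps)
    then have y_near: "norm (y - w) \<le> r"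
      using t n by (simp add: r_def)
    then have yr: "y \<in> cball w r"
      by (simp add: dist_norm norm_minus_commute)
    have "v \<in> cball w \<rho>"
      using v \<rho>2 by (simp add: dist_norm norm_minus_commute)
    then have "Xi v \<in> K"
      using red v by blast
    moreover have "DXi w n \<in> K"
      using cone_reduction_tangent[OF dXi \<rho> K(1-3) K0 assms(3,4) Xi0 red tangent] .
    ultimately have kK: "Xi v + t *\<^sub>R DXi w n \<in> K"
      using t K_closed by simp
    have "norm (Xi y - Xi v - DXi w (y - v)) \<le> norm (y - v) * (L * r powr \<alpha>)"
      using r \<rho>2 by (intro holder_linearization_bound[OF der' hol \<open>0 < \<alpha>\<close> _ _ _ vr yr]) (use L in auto)
    moreover have "DXi w (y - v) = t *\<^sub>R DXi w n"
      using der \<rho> by (simp add: y_def linear_scale)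
    ultimately have err: "norm (Xi y - (Xi v + t *\<^sub>R DXi w n)) \<le> t * (L * r powr \<alpha>)"
      using t n by (simp add: y_def algebra_simps)
    have "r powr \<alpha> \<le> 1"
      using r \<rho>2 \<open>0 < \<alpha>\<close> by (intro powr_le1) auto
    then have "t * (L * r powr \<alpha>) \<le> \<rho>2 * L"
      using t L mult_mono[of t \<rho>2 "L * r powr \<alpha>" L] by (simp add: mult_left_le)
    then have "norm (Xi y - (Xi v + t *\<^sub>R DXi w n)) \<le> r0"
      using err \<rho>2 by linarith
    moreover have "norm (y - w) \<le> r0"
      using y_near r \<rho>2 by linarith
    ultimately obtain u where u: "Xi u = Xi v + t *\<^sub>R DXi w n" "norm (u - w) \<le> \<rho>"
      and close: "norm (u - y) \<le> c * norm (Xi y - (Xi v + t *\<^sub>R DXi w n))"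
      using inverse kK S(2) by blast
    have "u \<in> cball w \<rho>"
      using u(2) by (simp add: dist_norm norm_minus_commute)
    then have "u \<in> D \<inter> cball w \<rho>"
      unfolding red using kK u(1) by simp
    then have "u \<in> D"
      by simp
    moreover have "norm (u - y) \<le> c * L * t * r powr \<alpha>"
      using close mult_left_mono[OF err less_imp_le[OF c]] by (simp add: algebra_simps)
    ultimately show "\<exists>u\<in>D. norm (u - (v + t *\<^sub>R n)) \<le> c * L * t * (norm (v - w) + t) powr \<alpha>"
      by (auto simp: y_def r_def)
  qed
  with \<rho>2(1) c L show ?thesis
    by (intro that[of \<rho>2 "c * L"]) auto
qed

section \<open>Growth of the normal cone map\<close>

text \<open>Choosing \<open>s \<approx> \<eta>\<^bsup>1/\<alpha>\<^esup>\<close> in the family of bounds.\<close>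
lemma linear_minus_holder_family_bound:
  fixes \<rho> C M \<alpha> :: real
  assumes "0 < \<rho>" "0 < C" "0 < M" "0 < \<alpha>"
  obtains c1 where "0 < c1" "\<And>\<eta> P. 0 < \<eta> \<Longrightarrow> \<eta> \<le> M \<Longrightarrow>
    (\<And>s. 0 < s \<Longrightarrow> s \<le> \<rho> \<Longrightarrow> s * (\<eta> - M * C * s powr \<alpha>) \<le> P) \<Longrightarrow> c1 * \<eta> * \<eta> powr (1/\<alpha>) \<le> P"
proof
  define c1 where "c1 = min (\<rho> / M powr (1/\<alpha>)) (1 / (2 * M * C) powr (1/\<alpha>)) / 2"
  show "0 < c1"
    using assms by (simp add: c1_def)
  fix \<eta> P :: real
  assume \<eta>: "0 < \<eta>" "\<eta> \<le> M" and family: "\<And>s. 0 < s \<Longrightarrow> s \<le> \<rho> \<Longrightarrow> s * (\<eta> - M * C * s powr \<alpha>) \<le> P"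
  define s where "s = min \<rho> ((\<eta> / (2 * M * C)) powr (1/\<alpha>))"
  have s: "0 < s" "s \<le> \<rho>"
    using assms \<eta> by (auto simp: s_def)
  have "s powr \<alpha> \<le> ((\<eta> / (2 * M * C)) powr (1/\<alpha>)) powr \<alpha>"
    using s assms by (intro powr_mono2) (auto simp: s_def)
  then have "M * C * s powr \<alpha> \<le> \<eta> / 2"
    using assms \<eta> by (simp add: powr_powr field_simps)
  then have "s * (\<eta> / 2) \<le> P"
    using family[OF s] mult_left_mono[of "\<eta> / 2" "\<eta> - M * C * s powr \<alpha>" s] s by linarith
  moreover have "c1 * \<eta> powr (1/\<alpha>) \<le> s / 2"
  proof (cases "\<rho> \<le> (\<eta> / (2 * M * C)) powr (1/\<alpha>)")
    case True
    have "\<eta> powr (1/\<alpha>) \<le> M powr (1/\<alpha>)"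
      using \<eta> assms by (intro powr_mono2) auto
    then have "c1 * \<eta> powr (1/\<alpha>) \<le> (\<rho> / M powr (1/\<alpha>)) / 2 * M powr (1/\<alpha>)"
      using \<open>0 < c1\<close> by (intro mult_mono) (auto simp: c1_def)
    also have "\<dots> = \<rho> / 2"
      using assms by simp
    finally show ?thesis
      using True by (simp add: s_def)
  next
    case False
    then have "s = \<eta> powr (1/\<alpha>) / (2 * M * C) powr (1/\<alpha>)"
      using \<eta> assms by (simp add: s_def powr_divide)
    moreover have "c1 \<le> (1 / (2 * M * C) powr (1/\<alpha>)) / 2"
      by (simp add: c1_def)
    ultimately show ?thesis
      using mult_right_mono[of c1 "(1 / (2 * M * C) powr (1/\<alpha>)) / 2" "\<eta> powr (1/\<alpha>)"] by simp
  qed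
  then have "\<eta> * (c1 * \<eta> powr (1/\<alpha>)) \<le> \<eta> * (s / 2)"
    using \<eta> by (intro mult_left_mono) auto
  ultimately show "c1 * \<eta> * \<eta> powr (1/\<alpha>) \<le> P"
    by (simp add: algebra_simps)
qed

text \<open>Test the normality of \<open>x\<close> at \<open>w'\<close> against points of \<open>D\<close> near \<open>w + s n\<close>, where \<open>n\<close> is the
  unit direction from \<open>normal_cone D w\<close> to \<open>x\<close>.\<close>
lemma normal_cone_growth:
  fixes D :: "'a::euclidean_space set"
  assumes "w \<in> D" and approx: "uniform_tangent_approx \<alpha> D w \<rho> C"
    and "0 < \<rho>" "0 < C" "0 < M" "0 < \<alpha>"
  obtains c1 where "0 < c1" "\<And>x w'. x \<in> normal_cone D w' \<Longrightarrow> norm x \<le> M \<Longrightarrow>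
     c1 * infdist x (normal_cone D w) * infdist x (normal_cone D w) powr (1/\<alpha>) \<le> inner x (w' - w)"
proof -
  obtain c1 where c1: "0 < c1" and bound: "\<And>\<eta> P. 0 < \<eta> \<Longrightarrow> \<eta> \<le> M \<Longrightarrow>
    (\<And>s. 0 < s \<Longrightarrow> s \<le> \<rho> \<Longrightarrow> s * (\<eta> - M * C * s powr \<alpha>) \<le> P) \<Longrightarrow> c1 * \<eta> * \<eta> powr (1/\<alpha>) \<le> P"
    using linear_minus_holder_family_bound[OF assms(3-6)] by blast
  show ?thesis
  proof (rule that[OF c1])
    fix x w' assume x: "x \<in> normal_cone D w'" and xM: "norm x \<le> M"
    let ?N = "normal_cone D w" and ?\<eta> = "infdist x (normal_cone D w)"
    have w'D: "w' \<in> D"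
      using normal_cone_base_mem[OF x] .
    have normal: "inner x (u - w') \<le> 0" if "u \<in> D" for u
      using x w'D that by (simp add: mem_normal_cone)
    show "c1 * ?\<eta> * ?\<eta> powr (1/\<alpha>) \<le> inner x (w' - w)"
    proof (cases "?\<eta> = 0")
      case True
      then show ?thesis
        using normal[OF \<open>w \<in> D\<close>] by (simp add: inner_diff_right)
    next
      case False
      then have \<eta>: "0 < ?\<eta>"
        using infdist_nonneg[of x ?N] by linarith
      obtain p n where n: "norm n = 1" "\<forall>y\<in>?N. inner n y \<le> 0" "inner x n = ?\<eta>"
        using normal_cone_distance_direction[OF \<open>w \<in> D\<close> \<eta>] by metis
      have "?\<eta> \<le> M"
        using infdist_le[OF zero_in_normal_cone[OF \<open>w \<in> D\<close>], of x] xM by simp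
      moreover have "s * (?\<eta> - M * C * s powr \<alpha>) \<le> inner x (w' - w)" if s: "0 < s" "s \<le> \<rho>" for s
      proof -
        obtain u where u: "u \<in> D" "norm (u - (w + s *\<^sub>R n)) \<le> C * s * s powr \<alpha>"
          using uniform_tangent_approxD[OF approx \<open>w \<in> D\<close> _ n(1,2) s] \<open>0 < \<rho>\<close> by auto
        have "\<bar>inner x (u - (w + s *\<^sub>R n))\<bar> \<le> norm x * norm (u - (w + s *\<^sub>R n))"
          by (rule Cauchy_Schwarz_ineq2)
        also have "\<dots> \<le> M * (C * s * s powr \<alpha>)"
          using xM u(2) \<open>0 < M\<close> by (intro mult_mono) auto
        finally have "s * ?\<eta> - M * (C * s * s powr \<alpha>) \<le> inner x (u - w)"
          using n(3) by (simp add: inner_diff_right inner_add_right)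
        also have "\<dots> \<le> inner x (w' - w)"
          using normal[OF u(1)] by (simp add: inner_diff_right)
        finally show ?thesis
          by (simp add: algebra_simps)
      qed
      ultimately show ?thesis
        using bound[OF \<eta>] by blast
    qed
  qed
qed

lemma normal_cone_holder_outer:
  fixes D :: "'a::euclidean_space set"
  assumes "w \<in> D" and approx: "uniform_tangent_approx \<alpha> D w \<rho> C" and "0 \<le> C"
    and v: "norm (v - w) \<le> \<rho>" and z: "z \<in> normal_cone D v" "norm z \<le> M"
  shows "\<exists>a b. z = a + b \<and> a \<in> normal_cone D w \<and> norm b \<le> M * C * 2 powr \<alpha> * norm (v - w) powr \<alpha>"
proof (cases "infdist z (normal_cone D w) = 0")
  case True
  then have "z \<in> normal_cone D w"
    using in_closed_iff_infdist_zero[OF closed_normal_cone] zero_in_normal_cone[OF \<open>w \<in> D\<close>] by blast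
  moreover have "0 \<le> M"
    using z(2) norm_ge_zero order_trans by blast
  then have "norm (0::'a) \<le> M * C * 2 powr \<alpha> * norm (v - w) powr \<alpha>"
    using \<open>0 \<le> C\<close> by simp
  ultimately show ?thesis
    by (metis add.right_neutral)
next
  case False
  let ?N = "normal_cone D w" and ?\<eta> = "infdist z (normal_cone D w)"
  have \<eta>: "0 < ?\<eta>"
    using False infdist_nonneg[of z ?N] by linarith
  obtain p n where p: "p \<in> ?N" "z = p + ?\<eta> *\<^sub>R n"
    and n: "norm n = 1" "\<forall>y\<in>?N. inner n y \<le> 0" "inner z n = ?\<eta>"
    using normal_cone_distance_direction[OF \<open>w \<in> D\<close> \<eta>] by metis
  define t where "t = norm (v - w)"
  have "v \<noteq> w"
    using z(1) False by auto
  then have t: "0 < t" "t \<le> \<rho>"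
    using v by (auto simp: t_def)
  have vD: "v \<in> D"
    using normal_cone_base_mem[OF z(1)] .
  obtain u where u: "u \<in> D" "norm (u - (v + t *\<^sub>R n)) \<le> C * t * (t + t) powr \<alpha>"
    using uniform_tangent_approxD[OF approx vD v n(1,2) t] unfolding t_def by metis
  have "t * ?\<eta> = inner z (u - v) + inner z ((v + t *\<^sub>R n) - u)"
    using n(3) by (simp add: inner_diff_right inner_add_right)
  also have "\<dots> \<le> norm z * norm ((v + t *\<^sub>R n) - u)"
  proof -
    have "inner z (u - v) \<le> 0"
      using z(1) vD u(1) by (simp add: mem_normal_cone)
    then show ?thesis
      using Cauchy_Schwarz_ineq2[of z "(v + t *\<^sub>R n) - u"] by linarith
  qed
  also have "\<dots> \<le> M * (C * t * (t + t) powr \<alpha>)"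
    using z(2) u(2) order_trans[OF norm_ge_zero z(2)] by (intro mult_mono) (auto simp: norm_minus_commute)
  also have "(t + t) powr \<alpha> = 2 powr \<alpha> * t powr \<alpha>"
    using t by (simp add: powr_mult[symmetric])
  finally have "t * ?\<eta> \<le> t * (M * C * 2 powr \<alpha> * t powr \<alpha>)"
    by (simp add: algebra_simps)
  then have "norm (?\<eta> *\<^sub>R n) \<le> M * C * 2 powr \<alpha> * norm (v - w) powr \<alpha>"
    using t n(1) \<eta> by (simp add: t_def mult_le_cancel_left_pos)
  with p show ?thesis
    by blast
qed

section \<open>From error bounds to the KL inequality\<close>

lemma infdist_linear_preimage_le:
  fixes T :: "'a::euclidean_space \<Rightarrow> 'b::euclidean_space"
  assumes "linear T"
  obtains c where "0 < c" "\<And>x. infdist x (T -` {T x0}) \<le> c * norm (T x - T x0)"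
proof -
  obtain B where B: "linear B" "\<forall>y\<in>range T. T (B y) = y"
    using linear_exists_right_inverse_on[OF assms subspace_UNIV] by blast
  obtain c where c: "0 < c" "\<And>y. norm (B y) \<le> c * norm y"
    using linear_bounded_pos[OF B(1)] by blast
  show ?thesis
  proof (rule that[OF c(1)])
    fix x
    have "T x - T x0 = T (x - x0)"
      using assms by (simp add: linear_diff)
    then have "T (B (T x - T x0)) = T x - T x0"
      using B(2) by auto
    then have "T (x - B (T x - T x0)) = T x0"
      using assms by (simp add: linear_diff)
    then have "infdist x (T -` {T x0}) \<le> dist x (x - B (T x - T x0))"
      by (intro infdist_le) simp
    also have "\<dots> \<le> c * norm (T x - T x0)"
      using c(2) by (simp add: dist_norm)
    finally show "infdist x (T -` {T x0}) \<le> c * norm (T x - T x0)" .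
  qed
qed

text \<open>In the application \<open>d\<close> is the distance to the solution set, \<open>r = \<parallel>T x - T xbar\<parallel>\<close>,
  \<open>\<delta>\<close> the distance to \<open>N\<^sub>D(wbar)\<close> and \<open>G\<close> the norm of a subgradient.\<close>
lemma dist_le_powr_of_growth:
  fixes \<alpha> c1 \<mu> cc G d r \<delta> :: real
  assumes "0 < \<alpha>" "\<alpha> \<le> 1" "0 < c1" "0 < \<mu>" "0 < cc"
    and G: "0 \<le> G" "G \<le> 1" and "0 \<le> r" "0 \<le> \<delta>"
    and growth: "c1 * \<delta> * \<delta> powr (1/\<alpha>) + \<mu> * r\<^sup>2 \<le> G * d" and reg: "d \<le> cc * (r + \<delta>)"
  shows "d \<le> (4 * cc\<^sup>2 / \<mu> + 2 * cc * (2 * cc / c1) powr \<alpha>) * G powr \<alpha>"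
proof -
  have "G powr 1 \<le> G powr \<alpha>"
    using assms by (intro powr_mono') auto
  then have G_le: "G \<le> G powr \<alpha>"
    using G by simp
  have nonneg: "0 \<le> 4 * cc\<^sup>2 / \<mu> * G powr \<alpha>" "0 \<le> 2 * cc * (2 * cc / c1) powr \<alpha> * G powr \<alpha>"
    using assms by simp_all
  show ?thesis
  proof (cases "\<delta> \<le> r")
    case True
    have "cc * (r + \<delta>) \<le> cc * (2 * r)"
      using True assms by (intro mult_left_mono) auto
    then have d_le: "d \<le> 2 * cc * r"
      using reg by simp
    have "d \<le> 4 * cc\<^sup>2 / \<mu> * G powr \<alpha>"
    proof (cases "r = 0")
      case True
      then show ?thesis
        using d_le nonneg by simp
    next
      case False
      then have "0 < r"
        using assms by simp
      have "\<mu> * r\<^sup>2 \<le> G * (2 * cc * r)"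
        using growth d_le mult_left_mono[OF d_le G(1)] assms by (smt (verit) mult_nonneg_nonneg powr_ge_zero)
      then have "r * (\<mu> * r) \<le> r * (2 * cc * G)"
        by (simp add: power2_eq_square algebra_simps)
      then have "r \<le> 2 * cc * G / \<mu>"
        using \<open>0 < r\<close> assms by (simp add: mult_le_cancel_left_pos field_simps)
      then have "d \<le> 4 * cc\<^sup>2 / \<mu> * G"
        using d_le mult_left_mono[of r "2 * cc * G / \<mu>" "2 * cc"] assms by (simp add: power2_eq_square)
      also have "\<dots> \<le> 4 * cc\<^sup>2 / \<mu> * G powr \<alpha>"
        using G_le assms by (intro mult_left_mono) auto
      finally show ?thesis .
    qed
    then show ?thesis
      unfolding distrib_right using nonneg by linarith
  next
    case False
    then have "0 < \<delta>"
      using assms by simp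
    have "cc * (r + \<delta>) \<le> cc * (2 * \<delta>)"
      using False assms by (intro mult_left_mono) auto
    then have d_le: "d \<le> 2 * cc * \<delta>"
      using reg by simp
    have "c1 * \<delta> * \<delta> powr (1/\<alpha>) \<le> G * (2 * cc * \<delta>)"
      using growth mult_left_mono[OF d_le G(1)] assms by (smt (verit) mult_nonneg_nonneg zero_le_power2)
    then have "\<delta> * (c1 * \<delta> powr (1/\<alpha>)) \<le> \<delta> * (2 * cc * G)"
      by (simp add: algebra_simps)
    then have "\<delta> powr (1/\<alpha>) \<le> 2 * cc / c1 * G"
      using \<open>0 < \<delta>\<close> assms by (simp add: mult_le_cancel_left_pos field_simps)
    then have "(\<delta> powr (1/\<alpha>)) powr \<alpha> \<le> (2 * cc / c1 * G) powr \<alpha>"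
      using assms by (intro powr_mono2) auto
    then have "\<delta> \<le> (2 * cc / c1 * G) powr \<alpha>"
      using \<open>0 < \<delta>\<close> assms by (simp add: powr_powr)
    also have "\<dots> = (2 * cc / c1) powr \<alpha> * G powr \<alpha>"
      using powr_mult[of "2 * cc / c1" G \<alpha>] assms by simp
    finally have "\<delta> \<le> (2 * cc / c1) powr \<alpha> * G powr \<alpha>" .
    then have "2 * cc * \<delta> \<le> 2 * cc * ((2 * cc / c1) powr \<alpha> * G powr \<alpha>)"
      using assms by (intro mult_left_mono) auto
    then have "d \<le> 2 * cc * (2 * cc / c1) powr \<alpha> * G powr \<alpha>"
      using d_le by (simp add: mult.assoc)
    then show ?thesis
      unfolding distrib_right using nonneg by linarith
  qed
qed

lemma powr_le_of_mult_le_powr: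
  fixes H G d K \<alpha> :: real
  assumes "0 < H" "H < 1" "H \<le> G * d" "G \<le> 1 \<Longrightarrow> d \<le> K * G powr \<alpha>" "0 \<le> G" "0 < \<alpha>" "0 < K"
  shows "H powr (1/(\<alpha>+1)) \<le> max 1 (K powr (1/(\<alpha>+1))) * G"
proof (cases "G \<le> 1")
  case False
  have "H powr (1/(\<alpha>+1)) \<le> 1"
    using assms by (intro powr_le1) auto
  also have "\<dots> \<le> max 1 (K powr (1/(\<alpha>+1))) * G"
    using False mult_mono[of 1 "max 1 (K powr (1/(\<alpha>+1)))" 1 G] by simp
  finally show ?thesis .
next
  case True
  have "H \<le> G * (K * G powr \<alpha>)"
    using assms True mult_left_mono[of d "K * G powr \<alpha>" G] by linarith
  also have "\<dots> = K * G powr (1 + \<alpha>)"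
    using assms by (simp add: powr_add)
  finally have "H powr (1/(\<alpha>+1)) \<le> (K * G powr (1 + \<alpha>)) powr (1/(\<alpha>+1))"
    using assms by (intro powr_mono2) auto
  also have "\<dots> = K powr (1/(\<alpha>+1)) * G"
    using assms by (simp add: powr_mult powr_powr add.commute)
  also have "\<dots> \<le> max 1 (K powr (1/(\<alpha>+1))) * G"
    using assms by (intro mult_right_mono) auto
  finally show ?thesis .
qed

lemma KL_exponent_of_subgradient_bound:
  fixes h :: "'a::real_inner \<Rightarrow> ereal"
  assumes "subdiff h x0 \<noteq> {}" "0 < \<theta>" "\<theta> < 1" "0 < K" "open U" "x0 \<in> U"
    and bound: "\<And>x g. x \<in> U \<Longrightarrow> g \<in> subdiff h x \<Longrightarrow> h x0 < h x \<Longrightarrow> h x < h x0 + 1 \<Longrightarrow>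
      real_of_ereal (h x - h x0) powr \<theta> \<le> K * norm g"
  shows "KL_exponent h x0 \<theta>"
  unfolding KL_exponent_def
proof (intro conjI exI[of _ "1::ereal"] exI[of _ U] exI[of _ "K / (1 - \<theta>)"] ballI impI)
  obtain hb where hb: "h x0 = ereal hb"
    using assms(1) by (cases "h x0") (auto simp: subdiff_def)
  show "0 < K / (1 - \<theta>)"
    using assms by simp
  fix x assume x: "x \<in> U" and range: "h x0 < h x \<and> h x < h x0 + 1"
  then obtain hx where hx: "h x = ereal hx"
    using hb by (cases "h x") auto
  define H where "H = hx - hb"
  have H: "h x = ereal (hb + H)" "0 < H"
    using range hx hb by (auto simp: H_def)
  show "subdiff h x = {} \<or> 1 \<le> K / (1 - \<theta>) * (1 - \<theta>) * real_of_ereal (h x - h x0) powr - \<theta> *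
      infdist 0 (subdiff h x)"
  proof (cases "subdiff h x = {}")
    case False
    then have "subdiff h x \<noteq> {}" .
    have "H powr \<theta> / K \<le> infdist 0 (subdiff h x)"
      unfolding infdist_notempty[OF \<open>subdiff h x \<noteq> {}\<close>]
    proof (rule cINF_greatest[OF \<open>subdiff h x \<noteq> {}\<close>])
      fix g assume "g \<in> subdiff h x"
      then have "H powr \<theta> \<le> K * norm g"
        using bound[OF x _ conjunct1[OF range] conjunct2[OF range]] H hb by simp
      then show "H powr \<theta> / K \<le> dist 0 g"
        using assms by (simp add: field_simps)
    qed
    have "1 = K * H powr - \<theta> * (H powr \<theta> / K)"
      using H assms by (simp add: powr_minus field_simps)
    also have "\<dots> \<le> K * H powr - \<theta> * infdist 0 (subdiff h x)"
      using \<open>H powr \<theta> / K \<le> _\<close> assms by (intro mult_left_mono) auto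
    also have "\<dots> = K / (1 - \<theta>) * (1 - \<theta>) * real_of_ereal (h x - h x0) powr - \<theta> *
        infdist 0 (subdiff h x)"
      using H hb assms by simp
    finally show ?thesis
      by blast
  qed simp
qed (use assms in auto)

lemma normal_cone_holder:
  fixes D :: "'a::euclidean_space set"
  assumes "cone_reducible_at \<alpha> D w" "0 < \<alpha>" "convex D" "w \<in> D"
  shows "\<exists>\<rho>>0. \<exists>\<delta>>0. \<exists>\<kappa>>0. \<forall>v\<in>cball w \<rho>. normal_cone D v \<inter> cball x \<delta> \<subseteq>
    {a + b | a b. a \<in> normal_cone D w \<and> norm b \<le> \<kappa> * norm (v - w) powr \<alpha>}"
proof -
  obtain \<rho> C where \<rho>: "0 < \<rho>" and C: "0 < C" and approx: "uniform_tangent_approx \<alpha> D w \<rho> C"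
    using cone_reducible_at_imp_uniform_tangent_approx[OF assms] by blast
  define M where "M = norm x + 1"
  have "norm z \<le> M" if "z \<in> cball x 1" for z
    using that norm_triangle_sub[of z x] by (auto simp: M_def dist_norm norm_minus_commute)
  then have "\<forall>v\<in>cball w \<rho>. normal_cone D v \<inter> cball x 1 \<subseteq>
    {a + b | a b. a \<in> normal_cone D w \<and> norm b \<le> M * C * 2 powr \<alpha> * norm (v - w) powr \<alpha>}"
    using normal_cone_holder_outer[OF assms(4) approx less_imp_le[OF C]]
    by (fastforce simp: dist_norm norm_minus_commute)
  moreover have "0 < M * C * 2 powr \<alpha>"
    using C by (simp add: M_def add_nonneg_pos)
  ultimately show ?thesis
    using \<rho> by (intro exI[of _ \<rho>] exI[of _ "1::real"] exI[of _ "M * C * 2 powr \<alpha>"] conjI) auto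
qed

section \<open>The composite problem\<close>

locale composite_problem =
  fixes \<alpha> :: real and D :: "'a::euclidean_space set" and T :: "'a \<Rightarrow> 'b::euclidean_space"
    and l :: "'b \<Rightarrow> real" and gl :: "'b \<Rightarrow> 'b" and v :: 'a and h :: "'a \<Rightarrow> ereal"
  assumes alpha: "0 < \<alpha>" "\<alpha> \<le> 1"
    and D: "D \<noteq> {}" "closed D" "convex D" "cone_reducible \<alpha> D"
    and linear_T: "linear T"
    and strongly_convex: "\<And>C. compact C \<Longrightarrow> convex C \<Longrightarrow> strongly_convex_on C l"
    and gradient: "\<And>y. (l has_derivative (\<lambda>u. inner (gl y) u)) (at y)"
    and h_eq: "\<And>x. h x = ereal (l (T x) + inner v x) + support_fun D x"
begin

definition grad_f :: "'a \<Rightarrow> 'a" where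
  "grad_f x = adjoint T (gl (T x)) + v"

lemma has_derivative_smooth_part:
  "((\<lambda>x. l (T x) + inner v x) has_derivative (\<lambda>u. inner (grad_f x) u)) (at x)"
proof -
  have "((\<lambda>x. l (T x)) has_derivative (\<lambda>u. inner (gl (T x)) (T u))) (at x)"
    using has_derivative_compose[OF linear_imp_has_derivative[OF linear_T] gradient] by simp
  then have "((\<lambda>x. l (T x) + inner v x) has_derivative (\<lambda>u. inner (gl (T x)) (T u) + inner v u)) (at x)"
    by (intro derivative_intros)
  moreover have "inner (gl (T x)) (T u) + inner v u = inner (grad_f x) u" for u
    using adjoint_works[OF linear_T, of u "gl (T x)"] unfolding grad_f_def inner_add_left
    by (metis inner_commute)
  ultimately show ?thesis
    by simp
qed

lemma closed_preimage_Int_normal_cone: "closed (T -` {y} \<inter> normal_cone D w)"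
  using linear_T by (intro closed_Int closed_normal_cone continuous_closed_vimage)
    (auto simp: linear_continuous_at linear_conv_bounded_linear)

lemma inner_grad_f_diff:
  assumes "T z = T y"
  shows "inner (x - z) (grad_f x - grad_f y) = inner (T x - T y) (gl (T x) - gl (T y))"
  using adjoint_works[OF linear_T, of "x - z" "gl (T x) - gl (T y)"] assms linear_T
  by (simp add: grad_f_def linear_diff[OF adjoint_linear[OF linear_T]] linear_diff[OF linear_T])

lemma subdiff_characterization:
  assumes "g \<in> subdiff h x"
  shows "g - grad_f x \<in> D" "x \<in> normal_cone D (g - grad_f x)"
  using subdiff_smooth_plus_support_fun[where f = "\<lambda>x. l (T x) + inner v x",
      OF D(1-3) has_derivative_smooth_part _ assms] h_eq by simp_all

lemma minimizer_optimality:
  assumes "xbar \<in> argmin_set h"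
  shows "0 \<in> subdiff h xbar" "- grad_f xbar \<in> D" "xbar \<in> normal_cone D (- grad_f xbar)"
proof -
  have min: "h xbar \<le> h y" for y
    using assms by (simp add: argmin_set_def)
  have "h 0 = ereal (l (T 0))"
    using h_eq[of 0] support_fun_zero[OF D(1)] by (simp add: zero_ereal_def)
  then have "h xbar \<noteq> \<infinity>"
    using min[of 0] by auto
  moreover have "h xbar \<noteq> -\<infinity>"
    using h_eq[of xbar] support_fun_neq_MInfty[OF D(1)] by auto
  ultimately have "\<bar>h xbar\<bar> \<noteq> \<infinity>"
    by (cases "h xbar") auto
  then show "0 \<in> subdiff h xbar"
    using min by (simp add: subdiff_def)
  from subdiff_characterization[OF this]
  show "- grad_f xbar \<in> D" "xbar \<in> normal_cone D (- grad_f xbar)"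
    by simp_all
qed

text \<open>\<open>h\<close> is constant on \<open>T\<^sup>-\<^sup>1{T x} \<inter> N\<^sub>D(-\<nabla>f(x))\<close>; for a minimizer \<open>x\<close> this is the
  solution set.\<close>
lemma h_on_solution_set:
  assumes "T z = T x" "z \<in> normal_cone D (- grad_f x)"
  shows "h z = ereal (l (T x) - inner (T x) (gl (T x)))"
proof -
  have "inner z (adjoint T (gl (T x))) = inner (T x) (gl (T x))"
    using adjoint_works[OF linear_T, of z "gl (T x)"] assms(1) by simp
  then show ?thesis
    using h_eq[of z] support_fun_normal_cone[OF assms(2)] assms(1)
    by (simp add: grad_f_def inner_diff_right inner_add_right inner_commute)
qed

lemma error_bound_inequalities:
  assumes opt: "xbar \<in> argmin_set h" and g: "g \<in> subdiff h x"
    and z: "T z = T xbar" "z \<in> normal_cone D (- grad_f xbar)"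
  shows "real_of_ereal (h x - h xbar) \<le> inner g (x - z)"
    and "inner x (g - grad_f x - - grad_f xbar) + inner (T x - T xbar) (gl (T x) - gl (T xbar))
      \<le> inner g (x - z)"
proof -
  define c where "c = l (T xbar) - inner (T xbar) (gl (T xbar))"
  have hz: "h z = ereal c" "h xbar = ereal c"
    using h_on_solution_set[OF z] h_on_solution_set[of xbar xbar] minimizer_optimality(3)[OF opt]
    by (simp_all add: c_def)
  have "\<bar>h x\<bar> \<noteq> \<infinity>" and "h x + ereal (inner g (z - x)) \<le> h z"
    using g by (auto simp: subdiff_def split: if_splits)
  then show "real_of_ereal (h x - h xbar) \<le> inner g (x - z)"
    unfolding hz by (cases "h x") (auto simp: inner_diff_right)
  have "inner z (g - grad_f x - - grad_f xbar) \<le> 0"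
    using z(2) subdiff_characterization(1)[OF g] minimizer_optimality(2)[OF opt]
    by (simp add: mem_normal_cone inner_commute)
  moreover have "inner (x - z) (g - grad_f x - - grad_f xbar)
      = inner g (x - z) - inner (T x - T xbar) (gl (T x) - gl (T xbar))"
    using inner_grad_f_diff[OF z(1), of x] by (simp add: inner_diff_right inner_commute algebra_simps)
  then have "inner x (g - grad_f x - - grad_f xbar) - inner z (g - grad_f x - - grad_f xbar)
      = inner g (x - z) - inner (T x - T xbar) (gl (T x) - gl (T xbar))"
    by (simp only: inner_diff_left)
  ultimately show "inner x (g - grad_f x - - grad_f xbar) + inner (T x - T xbar) (gl (T x) - gl (T xbar))
      \<le> inner g (x - z)"
    by linarith
qed

text \<open>Regularity splits the distance to the solution set into \<open>\<parallel>T x - T xbar\<parallel>\<close>, controlled by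
  strong monotonicity of \<open>gl\<close>, and the distance to \<open>N\<^sub>D(wbar)\<close>, controlled by its growth.\<close>
lemma subdiff_error_bound:
  assumes opt: "xbar \<in> argmin_set h"
    and reg: "bdd_lin_regular (T -` {T xbar}) (normal_cone D (- grad_f xbar)) xbar"
  obtains K where "0 < K" "\<And>x g. x \<in> cball xbar 1 \<Longrightarrow> g \<in> subdiff h x \<Longrightarrow> norm g \<le> 1 \<Longrightarrow>
    infdist x (T -` {T xbar} \<inter> normal_cone D (- grad_f xbar)) \<le> K * norm g powr \<alpha>"
proof -
  let ?w = "- grad_f xbar"
  let ?N = "normal_cone D ?w"
  let ?Z = "T -` {T xbar} \<inter> ?N"
  have wD: "?w \<in> D" and xN: "xbar \<in> ?N"
    using minimizer_optimality[OF opt] by auto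
  obtain \<rho> C where \<rho>: "0 < \<rho>" and C: "0 < C" and approx: "uniform_tangent_approx \<alpha> D ?w \<rho> C"
    using cone_reducible_at_imp_uniform_tangent_approx[OF _ alpha(1) D(3) wD] D(4) wD
    by (auto simp: cone_reducible_def)
  define M where "M = norm xbar + 1"
  have M: "0 < M"
    by (simp add: M_def add_nonneg_pos)
  obtain c1 where c1: "0 < c1" and growth: "\<And>y w'. y \<in> normal_cone D w' \<Longrightarrow> norm y \<le> M \<Longrightarrow>
      c1 * infdist y ?N * infdist y ?N powr (1/\<alpha>) \<le> inner y (w' - ?w)"
    using normal_cone_growth[OF wD approx \<rho> C M alpha(1)] by blast
  have "compact (T ` cball xbar 1)" "convex (T ` cball xbar 1)"
    using linear_T by (auto intro: compact_continuous_image linear_continuous_on convex_linear_image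
        simp: linear_conv_bounded_linear)
  then obtain \<mu> where \<mu>: "0 < \<mu>" and mono: "\<And>a b. a \<in> T ` cball xbar 1 \<Longrightarrow> b \<in> T ` cball xbar 1 \<Longrightarrow>
      \<mu> * (norm (a - b))\<^sup>2 \<le> inner (gl a - gl b) (a - b)"
    using strongly_convex_on_imp_strongly_monotone[OF strongly_convex gradient] by metis
  obtain creg where creg: "0 < creg" and regular: "\<And>x. x \<in> cball xbar 1 \<Longrightarrow>
      infdist x ?Z \<le> creg * (infdist x (T -` {T xbar}) + infdist x ?N)"
    using reg unfolding bdd_lin_regular_def by (metis bounded_cball centre_in_ball interior_cball zero_less_one)
  obtain cT where cT: "0 < cT" and preimage: "\<And>x. infdist x (T -` {T xbar}) \<le> cT * norm (T x - T xbar)"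
    using infdist_linear_preimage_le[OF linear_T] by blast
  define cc where "cc = creg * (cT + 1)"
  have cc: "0 < cc"
    using creg cT by (simp add: cc_def)
  show ?thesis
  proof (rule that[of "4 * cc\<^sup>2 / \<mu> + 2 * cc * (2 * cc / c1) powr \<alpha>"])
    show "0 < 4 * cc\<^sup>2 / \<mu> + 2 * cc * (2 * cc / c1) powr \<alpha>"
      using cc \<mu> by (intro add_pos_nonneg) auto
    fix x g assume x: "x \<in> cball xbar 1" and g: "g \<in> subdiff h x" "norm g \<le> 1"
    obtain z where z: "z \<in> ?Z" "infdist x ?Z = dist x z"
      using infdist_attains_inf[OF closed_preimage_Int_normal_cone[of "T xbar" "- grad_f xbar"], of x] xN by blast
    define r where "r = norm (T x - T xbar)"
    define \<delta> where "\<delta> = infdist x ?N"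
    have "norm x \<le> M"
      using x norm_triangle_sub[of x xbar] by (simp add: M_def dist_norm norm_minus_commute)
    then have "c1 * \<delta> * \<delta> powr (1/\<alpha>) \<le> inner x (g - grad_f x - ?w)"
      unfolding \<delta>_def by (rule growth[OF subdiff_characterization(2)[OF g(1)]])
    moreover have "\<mu> * r\<^sup>2 \<le> inner (T x - T xbar) (gl (T x) - gl (T xbar))"
      using mono[of "T x" "T xbar"] x by (simp add: r_def inner_commute)
    moreover have "inner g (x - z) \<le> norm g * dist x z"
      using Cauchy_Schwarz_ineq2[of g "x - z"] by (simp add: dist_norm)
    ultimately have "c1 * \<delta> * \<delta> powr (1/\<alpha>) + \<mu> * r\<^sup>2 \<le> norm g * dist x z"
      using error_bound_inequalities(2)[OF opt g(1)] z(1) by force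
    moreover have "dist x z \<le> creg * (cT * r + \<delta>)"
      using regular[OF x] z(2) preimage[of x] creg
      by (force simp: r_def \<delta>_def intro: order_trans mult_left_mono)
    then have "dist x z \<le> cc * (r + \<delta>)"
      using cT creg infdist_nonneg[of x ?N] order_trans[OF _ mult_left_mono[of "cT * r + \<delta>" "(cT + 1) * (r + \<delta>)"]]
      by (force simp: cc_def r_def \<delta>_def algebra_simps)
    ultimately show "infdist x ?Z \<le> (4 * cc\<^sup>2 / \<mu> + 2 * cc * (2 * cc / c1) powr \<alpha>) * norm g powr \<alpha>"
      unfolding z(2) using alpha c1 \<mu> cc g(2)
      by (intro dist_le_powr_of_growth) (auto simp: r_def \<delta>_def infdist_nonneg)
  qed
qed

lemma KL_at_minimizer:
  assumes opt: "xbar \<in> argmin_set h"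
    and reg: "bdd_lin_regular (T -` {T xbar}) (normal_cone D (- grad_f xbar)) xbar"
  shows "KL_exponent h xbar (1 / (\<alpha> + 1))"
proof -
  let ?Z = "T -` {T xbar} \<inter> normal_cone D (- grad_f xbar)"
  obtain K where K: "0 < K" and error_bound: "\<And>x g. x \<in> cball xbar 1 \<Longrightarrow> g \<in> subdiff h x \<Longrightarrow>
      norm g \<le> 1 \<Longrightarrow> infdist x ?Z \<le> K * norm g powr \<alpha>"
    using subdiff_error_bound[OF opt reg] by blast
  have sub0: "0 \<in> subdiff h xbar" and xZ: "xbar \<in> ?Z"
    using minimizer_optimality[OF opt] by auto
  have bound: "real_of_ereal (h x - h xbar) powr (1 / (\<alpha> + 1)) \<le> max 1 (K powr (1/(\<alpha>+1))) * norm g"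
    if x: "x \<in> ball xbar 1" and g: "g \<in> subdiff h x" and range: "h xbar < h x" "h x < h xbar + 1" for x g
  proof -
    obtain z where z: "z \<in> ?Z" "infdist x ?Z = dist x z"
      using infdist_attains_inf[OF closed_preimage_Int_normal_cone[of "T xbar" "- grad_f xbar"], of x] xZ by blast
    obtain hb where hb: "h xbar = ereal hb"
      using sub0 by (cases "h xbar") (auto simp: subdiff_def)
    moreover obtain hx where hx: "h x = ereal hx"
      using range hb by (cases "h x") auto
    ultimately have H: "0 < real_of_ereal (h x - h xbar)" "real_of_ereal (h x - h xbar) < 1"
      using range by auto
    have "real_of_ereal (h x - h xbar) \<le> inner g (x - z)"
      using error_bound_inequalities(1)[OF opt g] z(1) by simp
    also have "\<dots> \<le> norm g * dist x z"
      using Cauchy_Schwarz_ineq2[of g "x - z"] by (simp add: dist_norm)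
    finally show ?thesis
      using error_bound[of x g] x g z(2) by (intro powr_le_of_mult_le_powr[OF H _ _ _ alpha(1) K]) auto
  qed
  show ?thesis
    using alpha sub0 bound
    by (intro KL_exponent_of_subgradient_bound[where U = "ball xbar 1" and K = "max 1 (K powr (1/(\<alpha>+1)))"])
      (auto simp: field_simps)
qed

end

theorem theorem4p3:
  fixes \<alpha> :: real
    and D :: "'a::euclidean_space set"
    and T :: "'a \<Rightarrow> 'b::euclidean_space"
    and l :: "'b \<Rightarrow> real"
    and gl :: "'b \<Rightarrow> 'b"
    and v :: 'a
    and h :: "'a \<Rightarrow> ereal"
    and xbar :: 'a
  assumes "0 < \<alpha>" and "\<alpha> \<le> 1"
    and "D \<noteq> {}" and "closed D" and "convex D" and "cone_reducible \<alpha> D"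
    and "linear T"
    and "\<And>C. compact C \<Longrightarrow> convex C \<Longrightarrow> strongly_convex_on C l"
    and "\<And>y. (l has_derivative (\<lambda>u. inner (gl y) u)) (at y)"
    and "locally_lipschitz gl"
    and "\<And>x. h x = ereal (l (T x) + inner v x) + support_fun D x"
    and "xbar \<in> argmin_set h"
  shows "xbar \<in> normal_cone D (- adjoint T (gl (T xbar)) - v)
    \<and> (\<exists>\<rho>>0. \<exists>\<delta>>0. \<exists>\<kappa>>0. \<forall>w\<in>cball (- adjoint T (gl (T xbar)) - v) \<rho>.
         normal_cone D w \<inter> cball xbar \<delta> \<subseteq>
           {a + b | a b. a \<in> normal_cone D (- adjoint T (gl (T xbar)) - v) \<and>
              norm b \<le> \<kappa> * (norm (w - (- adjoint T (gl (T xbar)) - v))) powr \<alpha>})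
    \<and> (bdd_lin_regular (T -` {T xbar}) (normal_cone D (- adjoint T (gl (T xbar)) - v)) xbar
         \<longrightarrow> KL_exponent h xbar (1 / (\<alpha> + 1)))"
proof -
  interpret composite_problem \<alpha> D T l gl v h
    by (rule composite_problem.intro) (use assms in auto)
  have w_eq: "- grad_f xbar = - adjoint T (gl (T xbar)) - v"
    by (simp add: grad_f_def)
  have wD: "- grad_f xbar \<in> D" and xN: "xbar \<in> normal_cone D (- grad_f xbar)"
    using minimizer_optimality[OF assms(12)] by auto
  have "cone_reducible_at \<alpha> D (- grad_f xbar)"
    using assms(6) wD by (simp add: cone_reducible_def)
  from normal_cone_holder[OF this assms(1,5) wD, of xbar] xN KL_at_minimizer[OF assms(12)]
  show ?thesis
    unfolding w_eq by blast
qed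

end
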